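(* Let $\phi:Z\to[-\infty,+\infty]$ be proper and closed, and suppose Assumptions (A1) and (A2) hold for some $\lambda\in\mathbb R$. Let $\tau\in(0,1/\lambda^-)$, write $J_\tau z=(J^X_\tau z,J^Y_\tau z)$. Then for every $z=(x,y)\in Z$ and every $z'=(x',y')\in D\phi$: $\frac{\mathsf d_X^2(J^X_\tau z,x')-\mathsf d_X^2(x,x')}{2\tau}+\frac\lambda2\mathsf d_X^2(J^X_\tau z,x')+\phi(J^X_\tau z,J^Y_\tau z)\le\phi(x',J^Y_\tau z)-\frac1{2\tau}\mathsf d_X^2(J^X_\tau z,x)$, $\frac{\mathsf d_Y^2(J^Y_\tau z,y')-\mathsf d_Y^2(y,y')}{2\tau}+\frac\lambda2\mathsf d_Y^2(J^Y_\tau z,y')+\phi(J^X_\tau z,y')\le\phi(J^X_\tau z,J^Y_\tau z)-\frac1{2\tau}\mathsf d_Y^2(J^Y_\tau z,y)$.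
   Context: $(X,\mathsf d_X)$, $(Y,\mathsf d_Y)$ complete metric spaces; $Z=X\times Y$. $D_X\phi=\{x:\phi(x,y)<+\infty\ \forall y\}$, $D_Y\phi=\{y:\phi(x,y)>-\infty\ \forall x\}$, $D\phi=D_X\phi\times D_Y\phi$; proper: $D\phi\ne\emptyset$; closed: for $x\in D_X\phi$, $y\mapsto\phi(x,y)$ upper semicontinuous, for $y\in D_Y\phi$, $x\mapsto\phi(x,y)$ lower semicontinuous. (A1): $\phi=+\infty$ on $(X\setminus D_X\phi)\times D_Y\phi$, $\phi=-\infty$ on $D_X\phi\times(Y\setminus D_Y\phi)$. $\lambda^-=\max\{-\lambda,0\}$, $1/\lambda^-:=+\infty$ if $\lambda^-=0$. $\Phi_\tau(x,y;x',y')=\phi(x',y')+\frac1{2\tau}(\mathsf d_X^2(x',x)-\mathsf d_Y^2(y',y))$. $f$ on $Z$ is $\mu$-convex-concave along curves $\gamma,\sigma$ if for all $t\in[0,1]$: $f(\gamma_t,y)\le(1-t)f(\gamma_0,y)+tf(\gamma_1,y)-\frac\mu2t(1-t)\mathsf d_X^2(\gamma_0,\gamma_1)$ for all $y$ and $f(x,\sigma_t)\ge(1-t)f(x,\sigma_0)+tf(x,\sigma_1)+\frac\mu2t(1-t)\mathsf d_Y^2(\sigma_0,\sigma_1)$ for all $x$. (A2) for $\lambda$: for every $(x,y)\in Z$, $(x_0,y_0),(x_1,y_1)\in D\phi$ there are continuous curves $\gamma$ from $x_0$ to $x_1$, $\sigma$ from $y_0$ to $y_1$ such that for all $\tau\in(0,1/\lambda^-)$,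 $(x',y')\mapsto\Phi_\tau(x,y;x',y')$ is $(\tau^{-1}+\lambda)$-convex-concave along them. Resolvent: $J_\tau z$ is the (unique, existing under these assumptions) saddle point of $z'\mapsto\Phi_\tau(z;z')$, i.e. the point $(\bar x,\bar y)$ with $\Phi_\tau(z;\bar x,y')\le\Phi_\tau(z;\bar x,\bar y)\le\Phi_\tau(z;x',\bar y)$ for all $(x',y')\in Z$. *)

theory Defs
  imports "HOL-Analysis.Analysis" "HOL-Library.Extended_Real"
begin

definition DX :: "('a \<Rightarrow> 'b \<Rightarrow> ereal) \<Rightarrow> 'a set" where
  "DX phi = {x. \<forall>y. phi x y < \<infinity>}"

definition DY :: "('a \<Rightarrow> 'b \<Rightarrow> ereal) \<Rightarrow> 'b set" where
  "DY phi = {y. \<forall>x. phi x y > -\<infinity>}"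

definition proper_sp :: "('a \<Rightarrow> 'b \<Rightarrow> ereal) \<Rightarrow> bool" where
  "proper_sp phi \<longleftrightarrow> DX phi \<times> DY phi \<noteq> {}"

definition lsc_fun :: "('c::topological_space \<Rightarrow> ereal) \<Rightarrow> bool" where
  "lsc_fun f \<longleftrightarrow> (\<forall>x. f x \<le> Liminf (at x) f)"

definition usc_fun :: "('c::topological_space \<Rightarrow> ereal) \<Rightarrow> bool" where
  "usc_fun f \<longleftrightarrow> (\<forall>x. Limsup (at x) f \<le> f x)"

definition closed_sp :: "('a::topological_space \<Rightarrow> 'b::topological_space \<Rightarrow> ereal) \<Rightarrow> bool" where
  "closed_sp phi \<longleftrightarrow>
     (\<forall>x\<in>DX phi. usc_fun (\<lambda>y. phi x y)) \<and> (\<forall>y\<in>DY phi. lsc_fun (\<lambda>x. phi x y))"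

definition A1 :: "('a \<Rightarrow> 'b \<Rightarrow> ereal) \<Rightarrow> bool" where
  "A1 phi \<longleftrightarrow>
     (\<forall>x y. x \<notin> DX phi \<and> y \<in> DY phi \<longrightarrow> phi x y = \<infinity>) \<and>
     (\<forall>x y. x \<in> DX phi \<and> y \<notin> DY phi \<longrightarrow> phi x y = -\<infinity>)"

definition lam_minus :: "real \<Rightarrow> real" where
  "lam_minus lam = max (- lam) 0"

text \<open>tau in (0, 1/lambda^-), with 1/0 = +infinity.\<close>
definition tau_adm :: "real \<Rightarrow> real \<Rightarrow> bool" where
  "tau_adm lam tau \<longleftrightarrow> 0 < tau \<and> (lam_minus lam = 0 \<or> tau < 1 / lam_minus lam)"

definition Phi_tau :: "('a::metric_space \<Rightarrow> 'b::metric_space \<Rightarrow> ereal) \<Rightarrow> real \<Rightarrow> 'a \<Rightarrow> 'b \<Rightarrow> 'a \<Rightarrow> 'b \<Rightarrow> ereal" where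
  "Phi_tau phi tau x y x' y' =
     phi x' y' + ereal ((dist x' x ^ 2 - dist y' y ^ 2) / (2 * tau))"

definition convex_concave_along ::
  "real \<Rightarrow> ('a::metric_space \<Rightarrow> 'b::metric_space \<Rightarrow> ereal) \<Rightarrow> (real \<Rightarrow> 'a) \<Rightarrow> (real \<Rightarrow> 'b) \<Rightarrow> bool" where
  "convex_concave_along mu f gamma sg \<longleftrightarrow>
     (\<forall>t\<in>{0..1}.
        (\<forall>y. f (gamma t) y \<le> ereal (1 - t) * f (gamma 0) y + ereal t * f (gamma 1) y
                 - ereal (mu / 2 * t * (1 - t) * dist (gamma 0) (gamma 1) ^ 2)) \<and>
        (\<forall>x. f x (sg t) \<ge> ereal (1 - t) * f x (sg 0) + ereal t * f x (sg 1)
                 + ereal (mu / 2 * t * (1 - t) * dist (sg 0) (sg 1) ^ 2)))"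

definition A2 :: "('a::metric_space \<Rightarrow> 'b::metric_space \<Rightarrow> ereal) \<Rightarrow> real \<Rightarrow> bool" where
  "A2 phi lam \<longleftrightarrow>
     (\<forall>x y. \<forall>x0\<in>DX phi. \<forall>y0\<in>DY phi. \<forall>x1\<in>DX phi. \<forall>y1\<in>DY phi.
        \<exists>gamma sg.
          continuous_on {0..1} gamma \<and> gamma 0 = x0 \<and> gamma 1 = x1 \<and>
          continuous_on {0..1} sg \<and> sg 0 = y0 \<and> sg 1 = y1 \<and>
          (\<forall>tau. tau_adm lam tau \<longrightarrow>
             convex_concave_along (1 / tau + lam) (Phi_tau phi tau x y) gamma sg))"

text \<open>(xb, yb) is a saddle point of z' \<mapsto> Phi_tau(z; z'), i.e. (xb, yb) = J_tau z.\<close>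
definition is_resolvent ::
  "('a::metric_space \<Rightarrow> 'b::metric_space \<Rightarrow> ereal) \<Rightarrow> real \<Rightarrow> 'a \<Rightarrow> 'b \<Rightarrow> 'a \<Rightarrow> 'b \<Rightarrow> bool" where
  "is_resolvent phi tau x y xb yb \<longleftrightarrow>
     (\<forall>x' y'. Phi_tau phi tau x y xb y' \<le> Phi_tau phi tau x y xb yb \<and>
              Phi_tau phi tau x y xb yb \<le> Phi_tau phi tau x y x' yb)"

end

theory Submission
  imports Defs
begin

text \<open>At the saddle point \<open>J\<^sub>\<tau> z\<close> the map \<open>x' \<mapsto> \<Phi>\<^sub>\<tau>(z; x', J\<^sup>Y\<^sub>\<tau> z)\<close> attains its
  minimum and is \<open>(\<tau>\<^sup>-\<^sup>1 + \<lambda>)\<close>-convex along the curve from \<open>J\<^sup>X\<^sub>\<tau> z\<close> to \<open>x'\<close> given by (A2).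
  Comparing the minimum with the convexity bound at time \<open>t\<close>, dividing by \<open>t\<close> and letting
  \<open>t \<rightarrow> 0\<close> gives \<open>(\<tau>\<^sup>-\<^sup>1 + \<lambda>)/2 \<cdot> d\<^sup>2(J\<^sup>X\<^sub>\<tau> z, x') \<le> \<Phi>\<^sub>\<tau>(z; x', J\<^sup>Y\<^sub>\<tau> z) - \<Phi>\<^sub>\<tau>(z; J\<^sub>\<tau> z)\<close>,
  which is the first inequality once \<open>\<Phi>\<^sub>\<tau>\<close> is expanded; the second is the concave counterpart
  in \<open>y\<close>. Properness and (A1) only serve to place \<open>J\<^sub>\<tau> z\<close> in \<open>D\<phi>\<close>, where all values involved
  are finite. Closedness and completeness matter only for the existence of \<open>J\<^sub>\<tau> z\<close>, which is
  assumed here.\<close>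

lemma chord_bound_imp_le_diff:
  fixes m M c :: real
  assumes chord: "\<And>t. 0 < t \<Longrightarrow> t < 1 \<Longrightarrow> m \<le> (1 - t) * m + t * M - c * t * (1 - t)"
  shows "c \<le> M - m"
proof (rule tendsto_le[of "at_right 0" "\<lambda>_. M - m" "M - m" "\<lambda>t. c * (1 - t)" c])
  show "((\<lambda>t. c * (1 - t)) \<longlongrightarrow> c) (at_right (0::real))"
    by (auto intro!: tendsto_eq_intros)
  have "c * (1 - t) \<le> M - m" if "0 < t" "t < 1" for t
  proof -
    have "t * (c * (1 - t)) \<le> t * (M - m)"
      using chord[OF that] by (simp add: algebra_simps)
    then show ?thesis
      using \<open>0 < t\<close> by simp
  qed
  then show "\<forall>\<^sub>F t in at_right 0. c * (1 - t) \<le> M - m"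
    unfolding eventually_at_right[OF zero_less_one] by (intro exI[of _ 1]) auto
qed auto

lemma convex_concave_along_min_gap:
  fixes f :: "'a::metric_space \<Rightarrow> 'b::metric_space \<Rightarrow> ereal"
  assumes cc: "convex_concave_along \<mu> f \<gamma> \<sigma>"
    and min: "\<And>u. f (\<gamma> 0) v \<le> f u v"
    and fin: "f (\<gamma> 0) v = ereal a" "f (\<gamma> 1) v = ereal b"
  shows "\<mu> / 2 * dist (\<gamma> 0) (\<gamma> 1) ^ 2 \<le> b - a"
proof (rule chord_bound_imp_le_diff)
  fix t :: real
  assume "0 < t" "t < 1"
  have "ereal a \<le> f (\<gamma> t) v"
    using min[of "\<gamma> t"] fin by simp
  also have "\<dots> \<le> ereal (1 - t) * f (\<gamma> 0) v + ereal t * f (\<gamma> 1) v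
                - ereal (\<mu> / 2 * t * (1 - t) * dist (\<gamma> 0) (\<gamma> 1) ^ 2)"
    using cc \<open>0 < t\<close> \<open>t < 1\<close> unfolding convex_concave_along_def by simp
  finally have "ereal a \<le> ereal ((1 - t) * a + t * b - \<mu> / 2 * t * (1 - t) * dist (\<gamma> 0) (\<gamma> 1) ^ 2)"
    unfolding fin by simp
  then show "a \<le> (1 - t) * a + t * b - \<mu> / 2 * dist (\<gamma> 0) (\<gamma> 1) ^ 2 * t * (1 - t)"
    by (simp add: algebra_simps)
qed

lemma convex_concave_along_max_gap:
  fixes f :: "'a::metric_space \<Rightarrow> 'b::metric_space \<Rightarrow> ereal"
  assumes cc: "convex_concave_along \<mu> f \<gamma> \<sigma>"
    and max: "\<And>v. f u v \<le> f u (\<sigma> 0)"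
    and fin: "f u (\<sigma> 0) = ereal a" "f u (\<sigma> 1) = ereal c"
  shows "\<mu> / 2 * dist (\<sigma> 0) (\<sigma> 1) ^ 2 \<le> a - c"
proof -
  have "\<mu> / 2 * dist (\<sigma> 0) (\<sigma> 1) ^ 2 \<le> (- c) - (- a)"
  proof (rule chord_bound_imp_le_diff)
    fix t :: real
    assume "0 < t" "t < 1"
    have "ereal ((1 - t) * a + t * c + \<mu> / 2 * t * (1 - t) * dist (\<sigma> 0) (\<sigma> 1) ^ 2)
            = ereal (1 - t) * f u (\<sigma> 0) + ereal t * f u (\<sigma> 1)
                + ereal (\<mu> / 2 * t * (1 - t) * dist (\<sigma> 0) (\<sigma> 1) ^ 2)"
      unfolding fin by simp
    also have "\<dots> \<le> f u (\<sigma> t)"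
      using cc \<open>0 < t\<close> \<open>t < 1\<close> unfolding convex_concave_along_def by simp
    also have "\<dots> \<le> ereal a"
      using max[of "\<sigma> t"] fin by simp
    finally have "(1 - t) * a + t * c + \<mu> / 2 * t * (1 - t) * dist (\<sigma> 0) (\<sigma> 1) ^ 2 \<le> a"
      by simp
    then show "- a \<le> (1 - t) * - a + t * - c - \<mu> / 2 * dist (\<sigma> 0) (\<sigma> 1) ^ 2 * t * (1 - t)"
      by (simp add: algebra_simps)
  qed
  then show ?thesis
    by simp
qed

lemma finite_on_domain:
  assumes "x \<in> DX phi" "y \<in> DY phi"
  obtains r where "phi x y = ereal r"
  using assms unfolding DX_def DY_def by (cases "phi x y") auto

lemma Phi_tau_ereal:
  "phi u v = ereal r \<Longrightarrow>
     Phi_tau phi tau x y u v = ereal (r + (dist u x ^ 2 - dist v y ^ 2) / (2 * tau))"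
  by (simp add: Phi_tau_def)

lemma Phi_tau_eq_infinity_iff:
  "Phi_tau phi tau x y u v = \<infinity> \<longleftrightarrow> phi u v = \<infinity>"
  "Phi_tau phi tau x y u v = -\<infinity> \<longleftrightarrow> phi u v = -\<infinity>"
  by (cases "phi u v"; simp add: Phi_tau_def)+

lemma resolvent_in_domain:
  assumes "proper_sp phi" "A1 phi" "is_resolvent phi tau x y xb yb"
  shows "xb \<in> DX phi" "yb \<in> DY phi"
proof -
  obtain x0 y0 where x0: "x0 \<in> DX phi" and y0: "y0 \<in> DY phi"
    using assms(1) unfolding proper_sp_def by auto
  note A1 = assms(2)[unfolded A1_def]
  have saddle: "Phi_tau phi tau x y xb y0 \<le> Phi_tau phi tau x y xb yb"
    "Phi_tau phi tau x y xb yb \<le> Phi_tau phi tau x y x0 yb"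
    using assms(3) unfolding is_resolvent_def by blast+
  show "yb \<in> DY phi"
  proof (rule ccontr)
    assume "yb \<notin> DY phi"
    then have "Phi_tau phi tau x y x0 yb = -\<infinity>"
      using A1 x0 by (simp add: Phi_tau_eq_infinity_iff)
    then have "Phi_tau phi tau x y xb y0 = -\<infinity>"
      using saddle by simp
    then have "phi xb y0 = -\<infinity>"
      by (simp add: Phi_tau_eq_infinity_iff)
    with y0 show False
      unfolding DY_def by auto
  qed
  show "xb \<in> DX phi"
  proof (rule ccontr)
    assume "xb \<notin> DX phi"
    then have "Phi_tau phi tau x y xb y0 = \<infinity>"
      using A1 y0 by (simp add: Phi_tau_eq_infinity_iff)
    then have "Phi_tau phi tau x y x0 yb = \<infinity>"
      using saddle by simp
    then have "phi x0 yb = \<infinity>"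
      by (simp add: Phi_tau_eq_infinity_iff)
    with x0 show False
      unfolding DX_def by auto
  qed
qed

lemma resolvent_variational_inequality_X:
  assumes "is_resolvent phi tau x y xb yb" "tau > 0"
    and cc: "convex_concave_along (1 / tau + lam) (Phi_tau phi tau x y) \<gamma> \<sigma>"
    and \<gamma>: "\<gamma> 0 = xb" "\<gamma> 1 = x'"
    and fin: "phi xb yb = ereal p" "phi x' yb = ereal q"
  shows "(dist xb x' ^ 2 - dist x x' ^ 2) / (2 * tau) + lam / 2 * dist xb x' ^ 2 + p
           \<le> q - dist xb x ^ 2 / (2 * tau)"
proof -
  have "\<And>u. Phi_tau phi tau x y (\<gamma> 0) yb \<le> Phi_tau phi tau x y u yb"
    using assms(1) unfolding is_resolvent_def \<gamma> by blast
  from convex_concave_along_min_gap[OF cc this, unfolded \<gamma>,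
      OF Phi_tau_ereal[of phi, OF fin(1)] Phi_tau_ereal[of phi, OF fin(2)]]
  have "(1 / tau + lam) / 2 * dist xb x' ^ 2
          \<le> q + (dist x' x ^ 2 - dist yb y ^ 2) / (2 * tau) - (p + (dist xb x ^ 2 - dist yb y ^ 2) / (2 * tau))" .
  moreover have "(1 / tau + lam) / 2 * dist xb x' ^ 2 = dist xb x' ^ 2 / (2 * tau) + lam / 2 * dist xb x' ^ 2"
    using \<open>tau > 0\<close> by (simp add: field_simps)
  ultimately show ?thesis
    unfolding dist_commute[of x' x] diff_divide_distrib by linarith
qed

lemma resolvent_variational_inequality_Y:
  assumes "is_resolvent phi tau x y xb yb" "tau > 0"
    and cc: "convex_concave_along (1 / tau + lam) (Phi_tau phi tau x y) \<gamma> \<sigma>"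
    and \<sigma>: "\<sigma> 0 = yb" "\<sigma> 1 = y'"
    and fin: "phi xb yb = ereal p" "phi xb y' = ereal q"
  shows "(dist yb y' ^ 2 - dist y y' ^ 2) / (2 * tau) + lam / 2 * dist yb y' ^ 2 + q
           \<le> p - dist yb y ^ 2 / (2 * tau)"
proof -
  have "\<And>v. Phi_tau phi tau x y xb v \<le> Phi_tau phi tau x y xb (\<sigma> 0)"
    using assms(1) unfolding is_resolvent_def \<sigma> by blast
  from convex_concave_along_max_gap[OF cc this, unfolded \<sigma>,
      OF Phi_tau_ereal[of phi, OF fin(1)] Phi_tau_ereal[of phi, OF fin(2)]]
  have "(1 / tau + lam) / 2 * dist yb y' ^ 2
          \<le> p + (dist xb x ^ 2 - dist yb y ^ 2) / (2 * tau) - (q + (dist xb x ^ 2 - dist y' y ^ 2) / (2 * tau))" .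
  moreover have "(1 / tau + lam) / 2 * dist yb y' ^ 2 = dist yb y' ^ 2 / (2 * tau) + lam / 2 * dist yb y' ^ 2"
    using \<open>tau > 0\<close> by (simp add: field_simps)
  ultimately show ?thesis
    unfolding dist_commute[of y' y] diff_divide_distrib by linarith
qed

theorem mainTheorem10:
  fixes phi :: "'a::complete_space \<Rightarrow> 'b::complete_space \<Rightarrow> ereal"
    and lam tau :: real and x xb x' :: 'a and y yb y' :: 'b
  assumes "proper_sp phi" and "closed_sp phi" and "A1 phi" and "A2 phi lam"
    and "tau_adm lam tau"
    and "is_resolvent phi tau x y xb yb"
    and "x' \<in> DX phi" and "y' \<in> DY phi"
  shows "(ereal ((dist xb x' ^ 2 - dist x x' ^ 2) / (2 * tau) + lam / 2 * dist xb x' ^ 2) + phi xb yb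
           \<le> phi x' yb - ereal (dist xb x ^ 2 / (2 * tau))) \<and>
         (ereal ((dist yb y' ^ 2 - dist y y' ^ 2) / (2 * tau) + lam / 2 * dist yb y' ^ 2) + phi xb y'
           \<le> phi xb yb - ereal (dist yb y ^ 2 / (2 * tau)))"
proof -
  have xb: "xb \<in> DX phi" and yb: "yb \<in> DY phi"
    using resolvent_in_domain[OF assms(1,3,6)] by simp_all
  obtain p00 where p00: "phi xb yb = ereal p00"
    using finite_on_domain[OF xb yb] .
  obtain p10 where p10: "phi x' yb = ereal p10"
    using finite_on_domain[OF assms(7) yb] .
  obtain p01 where p01: "phi xb y' = ereal p01"
    using finite_on_domain[OF xb assms(8)] .
  obtain \<gamma> \<sigma> where \<gamma>: "\<gamma> 0 = xb" "\<gamma> 1 = x'" and \<sigma>: "\<sigma> 0 = yb" "\<sigma> 1 = y'"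
    and cc: "convex_concave_along (1 / tau + lam) (Phi_tau phi tau x y) \<gamma> \<sigma>"
    using assms(4,5,7,8) xb yb unfolding A2_def by blast
  have "tau > 0"
    using assms(5) unfolding tau_adm_def by simp
  show ?thesis
    using resolvent_variational_inequality_X[OF assms(6) \<open>tau > 0\<close> cc \<gamma> p00 p10]
      resolvent_variational_inequality_Y[OF assms(6) \<open>tau > 0\<close> cc \<sigma> p00 p01]
    unfolding p00 p10 p01 plus_ereal.simps(1) ereal_minus(1) ereal_less_eq(3) by blast
qed

end
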